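(* Let $X$ and $Y$ be Tychonoff spaces with $Y$ a $P$-space, and let $f:X\to Y$ be a nearly perfect mapping. Then $f(N(X))=N(Y)$.
   Context: A space $X$ is Menger if for each sequence $(\mathcal{U}_n)$ of open covers of $X$ there is a sequence $(\mathcal{V}_n)$ with each $\mathcal{V}_n$ a finite subset of $\mathcal{U}_n$ and $\bigcup_{n}\bigcup\mathcal{V}_n=X$. $X$ is locally Menger at $x$ if there are an open set $U$ and a Menger subspace $M$ of $X$ with $x\in U\subseteq M$; $N(X)$ denotes the set of points of $X$ at which $X$ is not locally Menger. A $P$-space is a space in which every countable intersection of open sets is open. A mapping $f:X\to Y$ is nearly perfect if it is a closed continuous surjection such that $f^{-1}(y)$ is Menger for every $y\in Y$. *)

theory Defs
  imports "HOL-Analysis.Analysis"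
begin

definition tychonoff_space :: "'a topology \<Rightarrow> bool" where
  "tychonoff_space X \<longleftrightarrow> t1_space X \<and> completely_regular_space X"

definition menger_space :: "'a topology \<Rightarrow> bool" where
  "menger_space X \<longleftrightarrow>
     (\<forall>\<U> :: nat \<Rightarrow> 'a set set.
        (\<forall>n. (\<forall>U\<in>\<U> n. openin X U) \<and> topspace X \<subseteq> \<Union>(\<U> n)) \<longrightarrow>
        (\<exists>\<V> :: nat \<Rightarrow> 'a set set.
           (\<forall>n. finite (\<V> n) \<and> \<V> n \<subseteq> \<U> n) \<and>
           topspace X \<subseteq> (\<Union>n. \<Union>(\<V> n))))"

definition locally_menger_at :: "'a topology \<Rightarrow> 'a \<Rightarrow> bool" where
  "locally_menger_at X x \<longleftrightarrow>
     (\<exists>U M. openin X U \<and> M \<subseteq> topspace X \<and> menger_space (subtopology X M)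
            \<and> x \<in> U \<and> U \<subseteq> M)"

definition not_locally_menger_set :: "'a topology \<Rightarrow> 'a set" where
  "not_locally_menger_set X = {x \<in> topspace X. \<not> locally_menger_at X x}"

definition P_space :: "'a topology \<Rightarrow> bool" where
  "P_space X \<longleftrightarrow>
     (\<forall>\<F>. countable \<F> \<and> \<F> \<noteq> {} \<and> (\<forall>U\<in>\<F>. openin X U) \<longrightarrow> openin X (\<Inter>\<F>))"

definition nearly_perfect_map :: "'a topology \<Rightarrow> 'b topology \<Rightarrow> ('a \<Rightarrow> 'b) \<Rightarrow> bool" where
  "nearly_perfect_map X Y f \<longleftrightarrow>
     continuous_map X Y f \<and> closed_map X Y f \<and> f ` topspace X = topspace Y \<and>
     (\<forall>y\<in>topspace Y. menger_space (subtopology X {x \<in> topspace X. f x = y}))"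

end

(* A closed map f has the property that every open set around a fibre f^-1(y) contains the
   preimage of an open neighbourhood of y.  Given open covers U_0, U_1, ... of f^-1(M) with M
   Menger, for each y in M and each j the Menger fibre over y yields finite selections from the
   j-th subsequence of the covers that cover the preimage of a neighbourhood V(y,j); in a P-space
   the intersection of the V(y,j) over j is still a neighbourhood of y, countably many of these
   cover M (Menger sets are Lindeloef), and assigning distinct subsequences to these countably
   many points yields a Menger selection for f^-1(M).  So preimages of Menger sets are Menger and
   x is locally Menger whenever f x is.  Conversely, if every point of the Menger fibre over y is
   locally Menger, countably many witnessing open sets cover the fibre, and closedness of f gives
   a neighbourhood of y inside the image of the countable union of the corresponding Menger sets. *)

theory Submission
  imports Defs
begin

definition finite_selection_covers :: "(nat \<Rightarrow> 'a set set) \<Rightarrow> 'a set \<Rightarrow> bool" where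
  "finite_selection_covers \<U> S \<longleftrightarrow>
     (\<exists>\<V>. (\<forall>n. finite (\<V> n) \<and> \<V> n \<subseteq> \<U> n) \<and> S \<subseteq> (\<Union>n. \<Union>(\<V> n)))"

lemma finite_selection_coversI:
  "(\<And>n. finite (\<V> n)) \<Longrightarrow> (\<And>n. \<V> n \<subseteq> \<U> n) \<Longrightarrow> S \<subseteq> (\<Union>n. \<Union>(\<V> n))
    \<Longrightarrow> finite_selection_covers \<U> S"
  unfolding finite_selection_covers_def by blast

lemma finite_selection_coversE:
  assumes "finite_selection_covers \<U> S"
  obtains \<V> where "\<And>n. finite (\<V> n)" "\<And>n. \<V> n \<subseteq> \<U> n" "S \<subseteq> (\<Union>n. \<Union>(\<V> n))"
  using assms unfolding finite_selection_covers_def by blast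

lemma finite_selection_covers_subset:
  assumes "finite_selection_covers \<U> S" "T \<subseteq> S"
  shows "finite_selection_covers \<U> T"
proof -
  obtain \<V> where "\<And>n. finite (\<V> n)" "\<And>n. \<V> n \<subseteq> \<U> n" "S \<subseteq> (\<Union>n. \<Union>(\<V> n))"
    using assms(1) by (rule finite_selection_coversE) blast
  with assms(2) show ?thesis
    by (intro finite_selection_coversI[of \<V>]) auto
qed

lemma finite_selection_covers_image:
  assumes "finite_selection_covers (\<lambda>n. g ` \<U> n) S"
    and "\<And>U x. x \<in> S \<Longrightarrow> x \<in> g U \<Longrightarrow> h x \<in> U"
  shows "finite_selection_covers \<U> (h ` S)"
proof -
  obtain \<V> where fin: "\<And>n. finite (\<V> n)" and sub: "\<And>n. \<V> n \<subseteq> g ` \<U> n"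
    and cover: "S \<subseteq> (\<Union>n. \<Union>(\<V> n))"
    using assms(1) by (rule finite_selection_coversE) blast
  have "\<exists>\<C>. \<C> \<subseteq> \<U> n \<and> finite \<C> \<and> \<V> n = g ` \<C>" for n
    using finite_subset_image[OF fin sub] .
  then obtain \<C> where \<C>: "\<And>n. \<C> n \<subseteq> \<U> n \<and> finite (\<C> n) \<and> \<V> n = g ` \<C> n"
    by metis
  have "h ` S \<subseteq> (\<Union>n. \<Union>(\<C> n))"
  proof
    fix y assume "y \<in> h ` S"
    then obtain x where "x \<in> S" "y = h x" by blast
    with cover \<C> obtain n U where "U \<in> \<C> n" "x \<in> g U" by blast
    with assms(2) \<open>x \<in> S\<close> \<open>y = h x\<close> show "y \<in> (\<Union>n. \<Union>(\<C> n))" by blast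
  qed
  with \<C> show ?thesis
    by (intro finite_selection_coversI[of \<C>]) auto
qed

lemma finite_selection_covers_UN:
  assumes "countable I"
    and "\<And>i. i \<in> I \<Longrightarrow> finite_selection_covers (\<lambda>m. \<U> (prod_encode (to_nat_on I i, m))) (S i)"
  shows "finite_selection_covers \<U> (\<Union>i\<in>I. S i)"
proof -
  have "\<exists>\<V>. (\<forall>m. finite (\<V> m) \<and> \<V> m \<subseteq> \<U> (prod_encode (to_nat_on I i, m)))
                \<and> S i \<subseteq> (\<Union>m. \<Union>(\<V> m))" if "i \<in> I" for i
    using assms(2)[OF that] unfolding finite_selection_covers_def .
  then obtain \<V>
    where \<V>: "\<And>i m. i \<in> I \<Longrightarrow> finite (\<V> i m) \<and> \<V> i m \<subseteq> \<U> (prod_encode (to_nat_on I i, m))"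
      and cover: "\<And>i. i \<in> I \<Longrightarrow> S i \<subseteq> (\<Union>m. \<Union>(\<V> i m))"
    by metis
  define \<W> where "\<W> n = (case prod_decode n of (k, m) \<Rightarrow>
      if k \<in> to_nat_on I ` I then \<V> (from_nat_into I k) m else {})" for n
  have \<W>_encode: "\<W> (prod_encode (to_nat_on I i, m)) = \<V> i m" if "i \<in> I" for i m
    using that assms(1) by (simp add: \<W>_def)
  have "finite (\<W> n) \<and> \<W> n \<subseteq> \<U> n" for n
  proof -
    obtain k m where n: "prod_decode n = (k, m)" by fastforce
    show ?thesis
    proof (cases "k \<in> to_nat_on I ` I")
      case True
      then obtain i where "i \<in> I" "k = to_nat_on I i" by blast
      moreover have "n = prod_encode (k, m)"
        using n by (metis prod_decode_inverse)
      ultimately show ?thesis using \<V> \<W>_encode by simp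
    next
      case False
      then show ?thesis by (simp add: \<W>_def n)
    qed
  qed
  moreover have "(\<Union>i\<in>I. S i) \<subseteq> (\<Union>n. \<Union>(\<W> n))"
  proof
    fix x assume "x \<in> (\<Union>i\<in>I. S i)"
    then obtain i m where "i \<in> I" "x \<in> \<Union>(\<V> i m)"
      using cover by blast
    then have "x \<in> \<Union>(\<W> (prod_encode (to_nat_on I i, m)))"
      using \<W>_encode by simp
    then show "x \<in> (\<Union>n. \<Union>(\<W> n))" by blast
  qed
  ultimately show ?thesis
    by (intro finite_selection_coversI[of \<W>]) auto
qed

definition mengerin :: "'a topology \<Rightarrow> 'a set \<Rightarrow> bool" where
  "mengerin X S \<longleftrightarrow> S \<subseteq> topspace X \<and>
     (\<forall>\<U>. (\<forall>n. (\<forall>U\<in>\<U> n. openin X U) \<and> S \<subseteq> \<Union>(\<U> n)) \<longrightarrow> finite_selection_covers \<U> S)"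

lemma mengerin_subset_topspace: "mengerin X S \<Longrightarrow> S \<subseteq> topspace X"
  by (simp add: mengerin_def)

lemma mengerinD:
  assumes "mengerin X S" "\<And>n. \<forall>U\<in>\<U> n. openin X U" "\<And>n. S \<subseteq> \<Union>(\<U> n)"
  shows "finite_selection_covers \<U> S"
  using assms unfolding mengerin_def by blast

lemma mengerinI:
  assumes "S \<subseteq> topspace X"
    and "\<And>\<U>. (\<And>n. \<forall>U\<in>\<U> n. openin X U) \<Longrightarrow> (\<And>n. S \<subseteq> \<Union>(\<U> n)) \<Longrightarrow> finite_selection_covers \<U> S"
  shows "mengerin X S"
  using assms unfolding mengerin_def by blast

lemma menger_space_finite_selection_covers:
  "menger_space X \<longleftrightarrow>
     (\<forall>\<U>. (\<forall>n. (\<forall>U\<in>\<U> n. openin X U) \<and> topspace X \<subseteq> \<Union>(\<U> n))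
            \<longrightarrow> finite_selection_covers \<U> (topspace X))"
  unfolding menger_space_def finite_selection_covers_def ..

lemma mengerin_subspace: "mengerin X S \<longleftrightarrow> S \<subseteq> topspace X \<and> menger_space (subtopology X S)"
proof (cases "S \<subseteq> topspace X")
  case True
  then have top: "topspace (subtopology X S) = S" by auto
  show ?thesis
  proof
    assume "mengerin X S"
    have "finite_selection_covers \<U>' S"
      if \<U>': "\<And>n. (\<forall>U\<in>\<U>' n. openin (subtopology X S) U) \<and> S \<subseteq> \<Union>(\<U>' n)" for \<U>'
    proof -
      define \<U> where "\<U> n = {T. openin X T \<and> T \<inter> S \<in> \<U>' n}" for n
      have "S \<subseteq> \<Union>(\<U> n)" for n
      proof
        fix x assume "x \<in> S"
        then obtain U where "U \<in> \<U>' n" "x \<in> U" using \<U>' by blast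
        moreover from this obtain T where "openin X T" "U = T \<inter> S"
          using \<U>' openin_subtopology by metis
        ultimately show "x \<in> \<Union>(\<U> n)" by (auto simp: \<U>_def)
      qed
      then have "finite_selection_covers \<U> S"
        by (intro mengerinD[OF \<open>mengerin X S\<close>]) (auto simp: \<U>_def)
      then obtain \<V> where "\<And>n. finite (\<V> n)" "\<And>n. \<V> n \<subseteq> \<U> n" "S \<subseteq> (\<Union>n. \<Union>(\<V> n))"
        by (rule finite_selection_coversE) blast
      then show ?thesis
        by (intro finite_selection_coversI[of "\<lambda>n. (\<lambda>T. T \<inter> S) ` \<V> n"]) (auto simp: \<U>_def)
    qed
    with True show "S \<subseteq> topspace X \<and> menger_space (subtopology X S)"
      unfolding menger_space_finite_selection_covers top by blast
  next
    assume "S \<subseteq> topspace X \<and> menger_space (subtopology X S)"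
    then have menger: "menger_space (subtopology X S)" by blast
    show "mengerin X S"
    proof (rule mengerinI[OF True])
      fix \<U> :: "nat \<Rightarrow> 'a set set"
      assume \<U>: "\<And>n. \<forall>U\<in>\<U> n. openin X U" "\<And>n. S \<subseteq> \<Union>(\<U> n)"
      have "\<forall>n. (\<forall>U\<in>(\<lambda>T. T \<inter> S) ` \<U> n. openin (subtopology X S) U)
                \<and> topspace (subtopology X S) \<subseteq> \<Union>((\<lambda>T. T \<inter> S) ` \<U> n)"
        using \<U> by (fastforce simp: top openin_subtopology_Int)
      with menger have "finite_selection_covers (\<lambda>n. (\<lambda>T. T \<inter> S) ` \<U> n) S"
        unfolding menger_space_finite_selection_covers top by simp
      then have "finite_selection_covers \<U> (id ` S)"
        by (rule finite_selection_covers_image) auto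
      then show "finite_selection_covers \<U> S" by simp
    qed
  qed
qed (simp add: mengerin_def)

lemma mengerin_countable_UN:
  fixes X :: "'a topology"
  assumes "countable I" "\<And>i. i \<in> I \<Longrightarrow> mengerin X (S i)"
  shows "mengerin X (\<Union>i\<in>I. S i)"
proof (rule mengerinI)
  show "(\<Union>i\<in>I. S i) \<subseteq> topspace X"
    using assms(2) mengerin_subset_topspace by blast
  fix \<U> :: "nat \<Rightarrow> 'a set set"
  assume \<U>: "\<And>n. \<forall>U\<in>\<U> n. openin X U" "\<And>n. (\<Union>i\<in>I. S i) \<subseteq> \<Union>(\<U> n)"
  show "finite_selection_covers \<U> (\<Union>i\<in>I. S i)"
  proof (rule finite_selection_covers_UN[OF assms(1)])
    fix i assume "i \<in> I"
    show "finite_selection_covers (\<lambda>m. \<U> (prod_encode (to_nat_on I i, m))) (S i)"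
    proof (rule mengerinD[OF assms(2)[OF \<open>i \<in> I\<close>]])
      show "\<forall>U\<in>\<U> (prod_encode (to_nat_on I i, m)). openin X U" for m
        using \<U>(1) by blast
      show "S i \<subseteq> \<Union>(\<U> (prod_encode (to_nat_on I i, m)))" for m
        using \<U>(2) \<open>i \<in> I\<close> by blast
    qed
  qed
qed

lemma image_mengerin:
  fixes X :: "'a topology" and Y :: "'b topology"
  assumes "mengerin X S" "continuous_map X Y f"
  shows "mengerin Y (f ` S)"
proof (rule mengerinI)
  show "f ` S \<subseteq> topspace Y"
    using assms continuous_map_image_subset_topspace mengerin_subset_topspace by blast
  fix \<U> :: "nat \<Rightarrow> 'b set set"
  assume \<U>: "\<And>n. \<forall>U\<in>\<U> n. openin Y U" "\<And>n. f ` S \<subseteq> \<Union>(\<U> n)"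
  let ?preimage = "\<lambda>U. {x \<in> topspace X. f x \<in> U}"
  have "S \<subseteq> topspace X"
    using assms(1) by (rule mengerin_subset_topspace)
  have "finite_selection_covers (\<lambda>n. ?preimage ` \<U> n) S"
  proof (rule mengerinD[OF assms(1)])
    show "\<forall>V\<in>?preimage ` \<U> n. openin X V" for n
      using \<U>(1) assms(2) by (auto intro: openin_continuous_map_preimage)
    show "S \<subseteq> \<Union>(?preimage ` \<U> n)" for n
      using \<U>(2)[of n] \<open>S \<subseteq> topspace X\<close> by blast
  qed
  then show "finite_selection_covers \<U> (f ` S)"
    by (rule finite_selection_covers_image) blast
qed

lemma mengerin_countable_subcover:
  fixes X :: "'a topology"
  assumes "mengerin X S" "\<forall>U\<in>\<C>. openin X U" "S \<subseteq> \<Union>\<C>"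
  obtains \<D> where "countable \<D>" "\<D> \<subseteq> \<C>" "S \<subseteq> \<Union>\<D>"
proof -
  have "finite_selection_covers (\<lambda>n. \<C>) S"
    using assms by (intro mengerinD) auto
  then obtain \<V> :: "nat \<Rightarrow> 'a set set"
    where fin: "\<And>n. finite (\<V> n)" and sub: "\<And>n. \<V> n \<subseteq> \<C>"
      and cover: "S \<subseteq> (\<Union>n. \<Union>(\<V> n))"
    by (rule finite_selection_coversE) blast
  have "countable (\<Union>n. \<V> n)"
    using fin by (simp add: countable_finite)
  moreover have "(\<Union>n. \<V> n) \<subseteq> \<C>"
    using sub by blast
  moreover have "S \<subseteq> \<Union>(\<Union>n. \<V> n)"
    using cover by blast
  ultimately show thesis
    by (rule that)
qed

lemma mengerin_countable_subcover_points:
  assumes "mengerin X S" "\<And>x. x \<in> S \<Longrightarrow> openin X (U x) \<and> x \<in> U x"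
  obtains D where "countable D" "D \<subseteq> S" "S \<subseteq> (\<Union>x\<in>D. U x)"
proof -
  have "\<forall>V\<in>U ` S. openin X V" "S \<subseteq> \<Union>(U ` S)"
    using assms(2) by auto
  then obtain \<D> where "countable \<D>" "\<D> \<subseteq> U ` S" and cover: "S \<subseteq> \<Union>\<D>"
    by (rule mengerin_countable_subcover[OF assms(1)])
  then have "\<exists>D. countable D \<and> D \<subseteq> S \<and> \<D> = U ` D"
    using countable_subset_image[of \<D> U S] by blast
  with cover show thesis
    using that by blast
qed

lemma P_space_openin_INT:
  assumes "P_space Y" "\<And>n::nat. openin Y (V n)"
  shows "openin Y (\<Inter>n. V n)"
  using assms unfolding P_space_def by simp

lemma locally_menger_at_mengerin:
  "locally_menger_at X x \<longleftrightarrow> (\<exists>U M. openin X U \<and> mengerin X M \<and> x \<in> U \<and> U \<subseteq> M)"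
  unfolding locally_menger_at_def mengerin_subspace by blast

lemma closed_map_finite_selection_neighbourhood:
  fixes X :: "'a topology" and Y :: "'b topology"
  assumes "closed_map X Y f" "y \<in> topspace Y" "\<And>n. \<forall>U\<in>\<U> n. openin X U"
    and "finite_selection_covers \<U> {x \<in> topspace X. f x = y}"
  shows "\<exists>V. openin Y V \<and> y \<in> V \<and> finite_selection_covers \<U> {x \<in> topspace X. f x \<in> V}"
proof -
  obtain \<V> :: "nat \<Rightarrow> 'a set set"
    where fin: "\<And>n. finite (\<V> n)" and sub: "\<And>n. \<V> n \<subseteq> \<U> n"
      and fibre: "{x \<in> topspace X. f x = y} \<subseteq> (\<Union>n. \<Union>(\<V> n))"
    using assms(4) by (rule finite_selection_coversE) blast
  have "openin X (\<Union>n. \<Union>(\<V> n))"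
    using sub assms(3) by blast
  then obtain V where "openin Y V" "y \<in> V" "{x \<in> topspace X. f x \<in> V} \<subseteq> (\<Union>n. \<Union>(\<V> n))"
    using assms(1,2) fibre unfolding closed_map_fibre_neighbourhood by meson
  moreover have "finite_selection_covers \<U> (\<Union>n. \<Union>(\<V> n))"
    using fin sub by (rule finite_selection_coversI) blast
  ultimately show ?thesis
    using finite_selection_covers_subset by blast
qed

lemma mengerin_closed_map_preimage:
  fixes X :: "'a topology" and Y :: "'b topology"
  assumes "closed_map X Y f" "P_space Y" "mengerin Y M"
    and "\<And>y. y \<in> M \<Longrightarrow> mengerin X {x \<in> topspace X. f x = y}"
  shows "mengerin X {x \<in> topspace X. f x \<in> M}"
proof (rule mengerinI)
  show "{x \<in> topspace X. f x \<in> M} \<subseteq> topspace X" by blast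
  fix \<U> :: "nat \<Rightarrow> 'a set set"
  assume \<U>: "\<And>n. \<forall>U\<in>\<U> n. openin X U" "\<And>n. {x \<in> topspace X. f x \<in> M} \<subseteq> \<Union>(\<U> n)"
  let ?slice = "\<lambda>j m. \<U> (prod_encode (j, m))"
  have "\<exists>V. openin Y V \<and> y \<in> V \<and> finite_selection_covers (?slice j) {x \<in> topspace X. f x \<in> V}"
    if "y \<in> M" for y j
  proof -
    have opens: "\<forall>U\<in>?slice j m. openin X U" for m
      using \<U>(1) by blast
    have covers: "finite_selection_covers (?slice j) {x \<in> topspace X. f x = y}"
    proof (rule mengerinD[OF assms(4)[OF that] opens])
      show "{x \<in> topspace X. f x = y} \<subseteq> \<Union>(?slice j m)" for m
        using \<U>(2) that by blast
    qed
    have "y \<in> topspace Y"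
      using that assms(3) mengerin_subset_topspace by blast
    then show ?thesis
      by (rule closed_map_finite_selection_neighbourhood[OF assms(1) _ opens covers])
  qed
  then obtain V where V: "\<And>y j. y \<in> M \<Longrightarrow> openin Y (V y j) \<and> y \<in> V y j
                           \<and> finite_selection_covers (?slice j) {x \<in> topspace X. f x \<in> V y j}"
    by metis
  have "openin Y (\<Inter>j. V y j) \<and> y \<in> (\<Inter>j. V y j)" if "y \<in> M" for y
    using V[OF that] P_space_openin_INT[OF assms(2)] by blast
  then obtain D where D: "countable D" "D \<subseteq> M" "M \<subseteq> (\<Union>y\<in>D. \<Inter>j. V y j)"
    by (rule mengerin_countable_subcover_points[OF assms(3)]) blast
  have "finite_selection_covers \<U> (\<Union>y\<in>D. {x \<in> topspace X. f x \<in> V y (to_nat_on D y)})"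
    using D(1,2) V by (intro finite_selection_covers_UN) auto
  moreover have
    "{x \<in> topspace X. f x \<in> M} \<subseteq> (\<Union>y\<in>D. {x \<in> topspace X. f x \<in> V y (to_nat_on D y)})"
    using D(3) by blast
  ultimately show "finite_selection_covers \<U> {x \<in> topspace X. f x \<in> M}"
    by (rule finite_selection_covers_subset)
qed

lemma locally_menger_at_closed_map_preimage:
  fixes X :: "'a topology" and Y :: "'b topology"
  assumes "continuous_map X Y f" "closed_map X Y f" "P_space Y"
    and "\<And>y. y \<in> topspace Y \<Longrightarrow> mengerin X {x \<in> topspace X. f x = y}"
    and "x \<in> topspace X" "locally_menger_at Y (f x)"
  shows "locally_menger_at X x"
proof -
  obtain U M where "openin Y U" "mengerin Y M" "f x \<in> U" "U \<subseteq> M"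
    using assms(6) unfolding locally_menger_at_mengerin by blast
  moreover have "mengerin X {z \<in> topspace X. f z \<in> M}"
  proof (rule mengerin_closed_map_preimage[OF assms(2,3) \<open>mengerin Y M\<close>])
    show "mengerin X {x \<in> topspace X. f x = y}" if "y \<in> M" for y
      using that \<open>mengerin Y M\<close> mengerin_subset_topspace assms(4) by blast
  qed
  moreover have "openin X {z \<in> topspace X. f z \<in> U}"
    using assms(1) \<open>openin Y U\<close> by (rule openin_continuous_map_preimage)
  ultimately show ?thesis
    unfolding locally_menger_at_mengerin using assms(5) by blast
qed

lemma locally_menger_at_closed_map_image:
  fixes X :: "'a topology" and Y :: "'b topology"
  assumes "continuous_map X Y f" "closed_map X Y f" "f ` topspace X = topspace Y"
    and "y \<in> topspace Y" "mengerin X {x \<in> topspace X. f x = y}"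
    and "\<And>x. x \<in> topspace X \<Longrightarrow> f x = y \<Longrightarrow> locally_menger_at X x"
  shows "locally_menger_at Y y"
proof -
  let ?F = "{x \<in> topspace X. f x = y}"
  have "\<exists>U M. openin X U \<and> mengerin X M \<and> x \<in> U \<and> U \<subseteq> M" if "x \<in> ?F" for x
    using assms(6) that unfolding locally_menger_at_mengerin by blast
  then obtain U M
    where UM: "\<And>x. x \<in> ?F \<Longrightarrow> openin X (U x) \<and> mengerin X (M x) \<and> x \<in> U x \<and> U x \<subseteq> M x"
    by metis
  then have "openin X (U x) \<and> x \<in> U x" if "x \<in> ?F" for x
    using that by blast
  then obtain D where D: "countable D" "D \<subseteq> ?F" "?F \<subseteq> (\<Union>x\<in>D. U x)"
    by (rule mengerin_countable_subcover_points[OF assms(5)]) blast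
  have "openin X (\<Union>x\<in>D. U x)"
    using D(2) UM by blast
  then obtain V where V: "openin Y V" "y \<in> V" "{x \<in> topspace X. f x \<in> V} \<subseteq> (\<Union>x\<in>D. U x)"
    using assms(2,4) D(3) unfolding closed_map_fibre_neighbourhood by meson
  have "V \<subseteq> f ` (\<Union>x\<in>D. M x)"
  proof
    fix z assume "z \<in> V"
    then obtain x where "x \<in> topspace X" "z = f x"
      using V(1) openin_subset assms(3) by blast
    with \<open>z \<in> V\<close> V(3) obtain d where "d \<in> D" "x \<in> U d" by blast
    with D(2) UM have "x \<in> M d" by blast
    with \<open>d \<in> D\<close> \<open>z = f x\<close> show "z \<in> f ` (\<Union>x\<in>D. M x)" by blast
  qed
  moreover have "mengerin Y (f ` (\<Union>x\<in>D. M x))"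
    using D UM by (intro image_mengerin[OF _ assms(1)] mengerin_countable_UN) auto
  ultimately show ?thesis
    unfolding locally_menger_at_mengerin using V(1,2) by blast
qed

theorem theorem5p15:
  fixes X :: "'a topology" and Y :: "'b topology" and f :: "'a \<Rightarrow> 'b"
  assumes "tychonoff_space X" and "tychonoff_space Y" and "P_space Y"
    and "nearly_perfect_map X Y f"
  shows "f ` not_locally_menger_set X = not_locally_menger_set Y"
proof -
  have cont: "continuous_map X Y f" and closed: "closed_map X Y f"
    and onto: "f ` topspace X = topspace Y"
    and fibres: "\<And>y. y \<in> topspace Y \<Longrightarrow> mengerin X {x \<in> topspace X. f x = y}"
    using assms(4) unfolding nearly_perfect_map_def mengerin_subspace by auto
  show ?thesis
  proof
    show "f ` not_locally_menger_set X \<subseteq> not_locally_menger_set Y"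
      using locally_menger_at_closed_map_preimage[OF cont closed assms(3) fibres]
        continuous_map_image_subset_topspace[OF cont]
      unfolding not_locally_menger_set_def by blast
    show "not_locally_menger_set Y \<subseteq> f ` not_locally_menger_set X"
      using locally_menger_at_closed_map_image[OF cont closed onto _ fibres]
      unfolding not_locally_menger_set_def by blast
  qed
qed

end
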